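(* $\displaystyle\lim_{m\to\infty} sd(\mathbb{Z}_2\times Q_{2^{m+1}})=0.$
   Context: For a finite group $G$, $L(G)$ is the set of all subgroups of $G$ and $sd(G)=\frac{1}{|L(G)|^2}|\{(H,K)\in L(G)^2: HK=KH\}|$. $Q_{2^{m+1}}=\langle x,y\mid x^{2^m}=e,\ y^2=x^{2^{m-1}},\ y^{-1}xy=x^{-1}\rangle$ is the generalized quaternion group of order $2^{m+1}$ ($m\geq 2$). *)

theory Defs
  imports "HOL-Algebra.Algebra" "HOL-Analysis.Analysis"
begin

definition subgroup_lattice :: "('a, 'b) monoid_scheme \<Rightarrow> 'a set set" where
  "subgroup_lattice G = {H. subgroup H G}"

definition sd :: "('a, 'b) monoid_scheme \<Rightarrow> real" where
  "sd G = real (card {(H, K). H \<in> subgroup_lattice G \<and> K \<in> subgroup_lattice G \<and>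
                     H <#>\<^bsub>G\<^esub> K = K <#>\<^bsub>G\<^esub> H})
          / real (card (subgroup_lattice G)) ^ 2"

text \<open>Generalized quaternion group Q_{2^(m+1)} = <x,y | x^(2^m)=e, y^2=x^(2^(m-1)), y^-1 x y = x^-1>,
  modelled concretely by its normal form: the pair (i,a) with 0 \<le> i < 2^m, a \<in> {0,1}
  stands for x^i y^a.  Using y x^k = x^(-k) y and y^2 = x^(2^(m-1)):
  x^i y^a * x^k y^b = x^(i + (-1)^a k + a b 2^(m-1)) y^(a+b mod 2).\<close>
definition quaternion_group :: "nat \<Rightarrow> (int \<times> int) monoid" where
  "quaternion_group m =
    \<lparr> carrier = {0..<2^m} \<times> {0..<2},
      monoid.mult = (\<lambda>(i, a) (k, b).
         ((i + (if a = 0 then k else - k) + a * b * 2^(m - 1)) mod 2^m, (a + b) mod 2)),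
      one = (0, 0) \<rparr>"

abbreviation Z2 :: "int monoid" where
  "Z2 \<equiv> integer_mod_group 2"

end

(* Let A = Z2 x <x> be the abelian subgroup of index 2 in G = Z2 x Q_{2^(m+1)}.  Its subgroups are
   few: a subgroup of A is determined by a divisor 2^k of 2^m and one of three possible odd layers,
   so there are at most 3(m + 1) of them.  On the other hand G has at least 2^m subgroups, e.g. the
   cyclic groups of order 4 generated by the elements (c, x^i y).  A subgroup H not contained in A is
   determined by H \<inter> A together with any element of H - A, and if HK = KH then the exponents of the
   elements x^i y in H and x^k y in K are tied by 2(i - k) \<in> P(H \<inter> A, K \<inter> A), a set of at most
   2|H \<inter> A||K \<inter> A| residues.  Double counting gives at most 2^(m+4) permuting pairs with prescribed
   traces on A, hence sd(G) \<le> (2 l n + l^2 2^(m+4)) / n^2 with l = O(m) and n \<ge> 2^m. *)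

theory Submission
  imports Defs "HOL-Real_Asymp.Real_Asymp"
begin

section \<open>Subgroups of finite groups\<close>

lemma (in group) finite_subgroupI:
  assumes sub: "H \<subseteq> carrier G" and fin: "finite H" and ne: "H \<noteq> {}"
    and mult: "\<And>x y. x \<in> H \<Longrightarrow> y \<in> H \<Longrightarrow> x \<otimes> y \<in> H"
  shows "subgroup H G"
proof -
  have onto: "(\<otimes>) x ` H = H" if x: "x \<in> H" for x
  proof (rule endo_inj_surj[OF fin])
    show "(\<otimes>) x ` H \<subseteq> H" using mult x by blast
    show "inj_on ((\<otimes>) x) H" using inj_on_cmult[of x] sub x by (blast intro: inj_on_subset)
  qed
  have inv: "inv x \<in> H" if x: "x \<in> H" for x
  proof -
    have xc: "x \<in> carrier G" using x sub by blast
    obtain e where e: "e \<in> H" "x \<otimes> e = x" using onto[OF x] x by (metis imageE)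
    then have "e = \<one>" using sub xc by auto
    then obtain y where y: "y \<in> H" "x \<otimes> y = \<one>" using onto[OF x] e(1) by (metis imageE)
    then have "y = inv x" using sub xc by (auto intro: inv_equality[symmetric] inv_comm)
    then show ?thesis using y by simp
  qed
  show ?thesis by (rule subgroupI[OF sub ne inv mult])
qed

definition subgroups_within :: "('a, 'b) monoid_scheme \<Rightarrow> 'a set \<Rightarrow> 'a set set" where
  "subgroups_within G A = {B \<in> subgroup_lattice G. B \<subseteq> A}"

definition permuting_subgroups :: "('a, 'b) monoid_scheme \<Rightarrow> ('a set \<times> 'a set) set" where
  "permuting_subgroups G =
     {(H, K). H \<in> subgroup_lattice G \<and> K \<in> subgroup_lattice G \<and> H <#>\<^bsub>G\<^esub> K = K <#>\<^bsub>G\<^esub> H}"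

definition permuting_fibre ::
    "('a, 'b) monoid_scheme \<Rightarrow> 'a set \<Rightarrow> 'a set \<Rightarrow> 'a set \<Rightarrow> ('a set \<times> 'a set) set" where
  "permuting_fibre G A B C =
     {(H, K) \<in> permuting_subgroups G. \<not> H \<subseteq> A \<and> \<not> K \<subseteq> A \<and> H \<inter> A = B \<and> K \<inter> A = C}"

lemma sd_eq_card_permuting_subgroups:
  "sd G = card (permuting_subgroups G) / card (subgroup_lattice G) ^ 2"
  by (simp add: sd_def permuting_subgroups_def)

lemma finite_subgroup_lattice:
  assumes "finite (carrier G)" shows "finite (subgroup_lattice G)"
proof (rule finite_subset)
  show "subgroup_lattice G \<subseteq> Pow (carrier G)"
    by (auto simp: subgroup_lattice_def dest: subgroup.subset)
qed (use assms in simp)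

lemma permuting_fibreD:
  assumes "(H, K) \<in> permuting_fibre G A B C"
  shows "subgroup H G" "subgroup K G" "H <#>\<^bsub>G\<^esub> K = K <#>\<^bsub>G\<^esub> H"
    "H \<inter> A = B" "K \<inter> A = C" "\<exists>h. h \<in> H - A" "\<exists>k. k \<in> K - A"
  using assms by (auto simp: permuting_fibre_def permuting_subgroups_def subgroup_lattice_def)

lemma finite_permuting_fibre:
  assumes "finite (carrier G)" shows "finite (permuting_fibre G A B C)"
  by (rule finite_subset[of _ "subgroup_lattice G \<times> subgroup_lattice G"])
    (auto simp: permuting_fibre_def permuting_subgroups_def finite_subgroup_lattice[OF assms])

lemma card_permuting_subgroups_le:
  assumes G: "group G" and fin: "finite (carrier G)" and A: "subgroup A G"
    and fibre: "\<And>B C. B \<in> subgroups_within G A \<Longrightarrow> C \<in> subgroups_within G A \<Longrightarrow>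
                   card (permuting_fibre G A B C) \<le> N"
  shows "card (permuting_subgroups G) \<le>
    2 * card (subgroups_within G A) * card (subgroup_lattice G) + card (subgroups_within G A) ^ 2 * N"
proof -
  define L where "L = subgroup_lattice G"
  define W where "W = subgroups_within G A"
  have finL: "finite L" unfolding L_def using fin by (rule finite_subgroup_lattice)
  have "W \<subseteq> L" by (auto simp: W_def L_def subgroups_within_def)
  then have finW: "finite W" using finL by (rule finite_subset)
  have Int_A: "H \<inter> A \<in> W" if "H \<in> L" for H
    using group.subgroups_Inter_pair[OF G _ A] that
    by (auto simp: W_def L_def subgroups_within_def subgroup_lattice_def)
  have "permuting_subgroups G \<subseteq> (W \<times> L) \<union> (L \<times> W) \<union> (\<Union>(B, C) \<in> W \<times> W. permuting_fibre G A B C)"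
  proof (rule subrelI)
    fix H K assume HK: "(H, K) \<in> permuting_subgroups G"
    then have L: "H \<in> L" "K \<in> L" by (auto simp: permuting_subgroups_def L_def)
    show "(H, K) \<in> (W \<times> L) \<union> (L \<times> W) \<union> (\<Union>(B, C) \<in> W \<times> W. permuting_fibre G A B C)"
    proof (cases "H \<subseteq> A \<or> K \<subseteq> A")
      case True
      then show ?thesis using L by (auto simp: W_def L_def subgroups_within_def)
    next
      case False
      then have "(H, K) \<in> permuting_fibre G A (H \<inter> A) (K \<inter> A)"
        using HK by (simp add: permuting_fibre_def)
      then show ?thesis using Int_A L by blast
    qed
  qed
  have "card (permuting_subgroups G) \<le> card ((W \<times> L) \<union> (L \<times> W) \<union> (\<Union>(B, C) \<in> W \<times> W. permuting_fibre G A B C))"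
    by (rule card_mono) (use finL finW finite_permuting_fibre[OF fin] \<open>permuting_subgroups G \<subseteq> _\<close> in auto)
  also have "\<dots> \<le> card (W \<times> L) + card (L \<times> W) + (\<Sum>(B, C) \<in> W \<times> W. card (permuting_fibre G A B C))"
    using card_UN_le[of "W \<times> W" "\<lambda>(B, C). permuting_fibre G A B C"] finW
    by (intro card_Un_le[THEN order_trans] add_mono card_Un_le) (simp_all add: case_prod_unfold)
  also have "\<dots> \<le> card (W \<times> L) + card (L \<times> W) + (\<Sum>(B, C) \<in> W \<times> W. N)"
    by (intro add_mono sum_mono) (auto simp: fibre W_def)
  finally show ?thesis
    by (simp add: W_def L_def card_cartesian_product power2_eq_square algebra_simps)
qed

lemma sd_le_fibre_bound:
  assumes G: "group G" and fin: "finite (carrier G)" and A: "subgroup A G"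
    and fibre: "\<And>B C. B \<in> subgroups_within G A \<Longrightarrow> C \<in> subgroups_within G A \<Longrightarrow>
                   card (permuting_fibre G A B C) \<le> N"
  shows "sd G \<le> 2 * card (subgroups_within G A) / card (subgroup_lattice G)
                  + card (subgroups_within G A) ^ 2 * N / card (subgroup_lattice G) ^ 2"
proof -
  define w where "w = real (card (subgroups_within G A))"
  define n where "n = real (card (subgroup_lattice G))"
  have "carrier G \<in> subgroup_lattice G"
    using group.subgroup_self[OF G] by (simp add: subgroup_lattice_def)
  then have n_pos: "0 < n"
    unfolding n_def using finite_subgroup_lattice[OF fin] card_gt_0_iff by fastforce
  have "real (card (permuting_subgroups G)) \<le> real (2 * card (subgroups_within G A) * card (subgroup_lattice G)
          + card (subgroups_within G A) ^ 2 * N)"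
    unfolding of_nat_le_iff by (rule card_permuting_subgroups_le[OF G fin A fibre])
  then have "real (card (permuting_subgroups G)) \<le> 2 * w * n + w ^ 2 * N"
    by (simp add: w_def n_def)
  moreover have "sd G = real (card (permuting_subgroups G)) / n ^ 2"
    by (simp add: sd_eq_card_permuting_subgroups n_def)
  ultimately have "sd G \<le> (2 * w * n + w ^ 2 * N) / n ^ 2"
    using n_pos by (simp add: divide_right_mono)
  also have "\<dots> = 2 * w / n + w ^ 2 * N / n ^ 2"
    using n_pos by (simp add: field_simps power2_eq_square)
  finally show ?thesis by (simp add: w_def n_def)
qed

locale subgroup_index_le_2 = group G for G (structure) +
  fixes A :: "'a set"
  assumes subgroup_A: "subgroup A G"
    and mult_outside: "x \<in> carrier G - A \<Longrightarrow> y \<in> carrier G - A \<Longrightarrow> x \<otimes> y \<in> A"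
begin

lemma inv_outside: "x \<in> carrier G - A \<Longrightarrow> inv x \<in> carrier G - A"
  using subgroup.m_inv_closed[OF subgroup_A, of "inv x"] by auto

lemma outside_eq_image:
  assumes H: "subgroup H G" and h: "h \<in> H - A"
  shows "H - A = (\<otimes>) h ` (H \<inter> A)"
proof
  have hc: "h \<in> carrier G" using H h subgroup.subset by blast
  show "H - A \<subseteq> (\<otimes>) h ` (H \<inter> A)"
  proof
    fix y assume y: "y \<in> H - A"
    have yc: "y \<in> carrier G" using H y subgroup.subset by blast
    have "inv h \<otimes> y \<in> H \<inter> A"
      using mult_outside[OF inv_outside] subgroup.m_closed[OF H subgroup.m_inv_closed[OF H]] h y hc yc
      by blast
    moreover have "y = h \<otimes> (inv h \<otimes> y)" using hc yc by (simp add: m_assoc[symmetric])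
    ultimately show "y \<in> (\<otimes>) h ` (H \<inter> A)" by blast
  qed
  show "(\<otimes>) h ` (H \<inter> A) \<subseteq> H - A"
  proof (rule image_subsetI)
    fix b assume b: "b \<in> H \<inter> A"
    then have bc: "b \<in> carrier G" using H subgroup.subset by blast
    have "h \<otimes> b \<notin> A"
    proof
      assume "h \<otimes> b \<in> A"
      then have "(h \<otimes> b) \<otimes> inv b \<in> A" using b subgroup_A by (simp add: subgroup.m_closed subgroup.m_inv_closed)
      then show False using h hc bc by (simp add: m_assoc)
    qed
    then show "h \<otimes> b \<in> H - A" using H h b by (simp add: subgroup.m_closed)
  qed
qed

lemma card_outside:
  assumes "subgroup H G" and "h \<in> H - A"
  shows "card (H - A) = card (H \<inter> A)"
proof -
  have "inj_on ((\<otimes>) h) (H \<inter> A)"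
    using inj_on_cmult[of h] assms subgroup.subset by (blast intro: inj_on_subset)
  then show ?thesis by (simp add: outside_eq_image[OF assms] card_image)
qed

lemma subgroup_eq_if_Int_eq:
  assumes "subgroup H G" "subgroup H' G" "h \<in> H - A" "h \<in> H'" "H \<inter> A = H' \<inter> A"
  shows "H = H'"
proof -
  have "H = (H \<inter> A) \<union> (H - A)" "H' = (H' \<inter> A) \<union> (H' - A)" by blast+
  moreover have "h \<in> H' - A" using assms(3,4) by blast
  then have "H - A = H' - A"
    using outside_eq_image[OF assms(1,3)] outside_eq_image[OF assms(2)] assms(5) by simp
  ultimately show ?thesis using assms(5) by simp
qed

text \<open>Double counting over the choices of h \<in> H - A and k \<in> K - A for the pairs (H, K) of a
  fibre: each pair has card B * card C of them, and (h, k) determines (H, K).\<close>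

lemma card_fibre_choices:
  assumes fin: "finite (carrier G)"
  shows "card (SIGMA p:permuting_fibre G A B C. (fst p - A) \<times> (snd p - A))
           = card (permuting_fibre G A B C) * (card B * card C)"
proof -
  have "finite ((fst p - A) \<times> (snd p - A))" if "p \<in> permuting_fibre G A B C" for p
  proof -
    obtain H K where pe: "p = (H, K)" by (cases p)
    note F = permuting_fibreD[OF that[unfolded pe]]
    show ?thesis
      using finite_subset[OF subgroup.subset[OF F(1)] fin] finite_subset[OF subgroup.subset[OF F(2)] fin]
      by (simp add: pe)
  qed
  then have "card (SIGMA p:permuting_fibre G A B C. (fst p - A) \<times> (snd p - A))
      = (\<Sum>p \<in> permuting_fibre G A B C. card ((fst p - A) \<times> (snd p - A)))"
    using finite_permuting_fibre[OF fin] by (intro card_SigmaI) auto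
  also have "\<dots> = (\<Sum>p \<in> permuting_fibre G A B C. card B * card C)"
  proof (rule sum.cong[OF refl])
    fix p assume p: "p \<in> permuting_fibre G A B C"
    obtain H K where pe: "p = (H, K)" by (cases p)
    note F = permuting_fibreD[OF p[unfolded pe]]
    obtain h k where "h \<in> H - A" "k \<in> K - A" using F(6,7) by blast
    then show "card ((fst p - A) \<times> (snd p - A)) = card B * card C"
      using card_outside[OF F(1)] card_outside[OF F(2)] F(4,5) by (simp add: pe card_cartesian_product)
  qed
  finally show ?thesis by simp
qed

lemma inj_on_fibre_choices: "inj_on snd (SIGMA p:permuting_fibre G A B C. (fst p - A) \<times> (snd p - A))"
proof (rule inj_onI)
  fix x y
  assume x: "x \<in> (SIGMA p:permuting_fibre G A B C. (fst p - A) \<times> (snd p - A))"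
    and y: "y \<in> (SIGMA p:permuting_fibre G A B C. (fst p - A) \<times> (snd p - A))" and xy: "snd x = snd y"
  obtain H K h k where xe: "x = ((H, K), h, k)" by (cases x) auto
  obtain H' K' where ye: "y = ((H', K'), h, k)" using xy xe by (cases y) auto
  have HK: "(H, K) \<in> permuting_fibre G A B C" "h \<in> H - A" "k \<in> K - A" using x by (auto simp: xe)
  have HK': "(H', K') \<in> permuting_fibre G A B C" "h \<in> H'" "k \<in> K'" using y by (auto simp: ye)
  note F = permuting_fibreD[OF HK(1)] and F' = permuting_fibreD[OF HK'(1)]
  have "H = H'" using subgroup_eq_if_Int_eq[OF F(1) F'(1) HK(2) HK'(2)] F(4) F'(4) by simp
  moreover have "K = K'" using subgroup_eq_if_Int_eq[OF F(2) F'(2) HK(3) HK'(3)] F(5) F'(5) by simp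
  ultimately show "x = y" by (simp add: xe ye)
qed

lemma card_permuting_fibre_mult_le:
  assumes fin: "finite (carrier G)"
    and R: "\<And>H K h k. (H, K) \<in> permuting_fibre G A B C \<Longrightarrow> h \<in> H - A \<Longrightarrow> k \<in> K - A \<Longrightarrow> R h k"
  shows "card (permuting_fibre G A B C) * (card B * card C)
           \<le> card {(h, k) \<in> (carrier G - A) \<times> (carrier G - A). R h k}"
proof -
  let ?S = "SIGMA p:permuting_fibre G A B C. (fst p - A) \<times> (snd p - A)"
  have "snd ` ?S \<subseteq> {(h, k) \<in> (carrier G - A) \<times> (carrier G - A). R h k}"
  proof (rule image_subsetI)
    fix x assume x: "x \<in> ?S"
    obtain H K h k where xe: "x = ((H, K), h, k)" by (cases x) auto
    have HK: "(H, K) \<in> permuting_fibre G A B C" "h \<in> H - A" "k \<in> K - A" using x by (auto simp: xe)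
    then show "snd x \<in> {(h, k) \<in> (carrier G - A) \<times> (carrier G - A). R h k}"
      using R[OF HK] subgroup.subset[OF permuting_fibreD(1)[OF HK(1)]]
        subgroup.subset[OF permuting_fibreD(2)[OF HK(1)]] by (auto simp: xe)
  qed
  then have "card (snd ` ?S) \<le> card {(h, k) \<in> (carrier G - A) \<times> (carrier G - A). R h k}"
    using fin by (intro card_mono) (auto intro: finite_subset[of _ "carrier G \<times> carrier G"])
  then show ?thesis using card_fibre_choices[OF fin] card_image[OF inj_on_fibre_choices] by simp
qed

end

section \<open>Arithmetic modulo n\<close>

lemma add_mod_closed_eq_multiples:
  fixes S :: "int set" and n :: int
  assumes n: "0 < n" and S: "S \<subseteq> {0..<n}" "0 \<in> S"
    and add: "\<And>x y. x \<in> S \<Longrightarrow> y \<in> S \<Longrightarrow> (x + y) mod n \<in> S"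
  shows "\<exists>d. 0 < d \<and> d dvd n \<and> S = {x \<in> {0..<n}. d dvd x}"
proof -
  \<comment> \<open>n is included so that S = {0} yields d = n.\<close>
  define D where "D = insert n (S - {0})"
  define d where "d = Min D"
  have finD: "finite D" unfolding D_def using S(1) finite_subset by blast
  have d: "d \<in> D" unfolding d_def using finD by (intro Min_in) (auto simp: D_def)
  have d_pos: "0 < d" using d S(1) n by (force simp: D_def)
  have d_le: "d \<le> n" unfolding d_def using finD by (simp add: D_def)
  have below_d: "x = 0" if "x \<in> S" "x < d" for x
    using that Min_le[OF finD, of x] by (auto simp: D_def d_def)
  have "d mod n \<in> S" using d S d_le by (auto simp: D_def)
  then have nat_mult: "(int t * d) mod n \<in> S" for t :: nat
  proof (induction t)
    case (Suc t)
    then have "((int t * d) mod n + d mod n) mod n \<in> S" using add by blast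
    then show ?case by (simp add: mod_simps algebra_simps)
  qed (simp add: S)
  have mult: "(s * d) mod n \<in> S" for s :: int
    using nat_mult[of "nat (s mod n)"] n by (simp add: mod_mult_left_eq)
  have mod_mod_n: "(y mod d) mod n = y mod d" for y
    using d_le pos_mod_bound[OF d_pos, of y] pos_mod_sign[OF d_pos, of y]
    by (intro mod_pos_pos_trivial) linarith+
  have mod_d: "x mod d \<in> S" if "x \<in> S" for x
  proof -
    have "(x + (- (x div d) * d) mod n) mod n \<in> S" using add[OF that mult] .
    moreover have "(x + (- (x div d) * d) mod n) mod n = (x - x div d * d) mod n"
      by (simp add: mod_add_right_eq)
    moreover have "x - x div d * d = x mod d" by (rule minus_div_mult_eq_mod)
    moreover note mod_mod_n
    ultimately show ?thesis by simp
  qed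
  have "(- (n div d) * d) mod n = (n - n div d * d) mod n" by (simp add: mod_simps)
  also have "\<dots> = n mod d" by (simp add: minus_div_mult_eq_mod mod_mod_n)
  finally have "n mod d \<in> S" using mult[of "- (n div d)"] by (simp only:)
  then have "d dvd n" using below_d[OF _ pos_mod_bound[OF d_pos]] dvd_eq_mod_eq_0 by blast
  moreover have "S = {x \<in> {0..<n}. d dvd x}"
  proof safe
    fix x assume "x \<in> S"
    then show "d dvd x" using below_d[OF mod_d pos_mod_bound[OF d_pos]] dvd_eq_mod_eq_0 by blast
  next
    fix x assume "x \<in> {0..<n}" "d dvd x"
    then show "x \<in> S" using mult[of "x div d"] by simp
  qed (use S in auto)
  ultimately show ?thesis using d_pos by blast
qed

lemma mod_eq_if_near_range:
  fixes x n :: int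
  assumes "- n \<le> x" "x < 2 * n"
  shows "x mod n = (if x < 0 then x + n else if x < n then x else x - n)"
proof -
  consider "x < 0" | "0 \<le> x" "x < n" | "n \<le> x" by linarith
  then show ?thesis
  proof cases
    case 1
    have "x mod n = (x + n) mod n" by simp
    also have "\<dots> = x + n" using 1 assms by (intro mod_pos_pos_trivial) auto
    finally show ?thesis using 1 by simp
  next
    case 3
    have "x mod n = (x - n) mod n" using 3 assms by (intro mod_pos_geq) auto
    also have "\<dots> = x - n" using 3 assms by (intro mod_pos_pos_trivial) auto
    finally show ?thesis using 3 assms by simp
  qed (simp add: mod_pos_pos_trivial)
qed

lemma card_solutions_double_mod_le_2:
  fixes h i p :: int
  assumes "0 < h"
  shows "card {x \<in> {0..<2 * h}. (2 * (i - x)) mod (2 * h) = p} \<le> 2"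
proof (cases "{x \<in> {0..<2 * h}. (2 * (i - x)) mod (2 * h) = p} = {}")
  case False
  then obtain x0 where x0: "x0 \<in> {0..<2 * h}" "(2 * (i - x0)) mod (2 * h) = p" by blast
  have "{x \<in> {0..<2 * h}. (2 * (i - x)) mod (2 * h) = p} \<subseteq> {x0 mod h, x0 mod h + h}"
  proof
    fix x assume "x \<in> {x \<in> {0..<2 * h}. (2 * (i - x)) mod (2 * h) = p}"
    then have x: "x \<in> {0..<2 * h}" "(2 * (i - x)) mod (2 * h) = p" by simp_all
    then have "(2 * (i - x0)) mod (2 * h) = (2 * (i - x)) mod (2 * h)" using x0 by simp
    then have "2 * h dvd 2 * (i - x0) - 2 * (i - x)" by (simp only: mod_eq_dvd_iff)
    also have "2 * (i - x0) - 2 * (i - x) = 2 * (x - x0)" by simp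
    finally have "h dvd x - x0" by (simp only: dvd_mult_cancel_left) simp
    then have "x mod h = x0 mod h" by (simp add: mod_eq_dvd_iff)
    moreover have "x mod h = (if x < h then x else x - h)"
      using x(1) mod_eq_if_near_range[of h x] \<open>0 < h\<close> by auto
    ultimately show "x \<in> {x0 mod h, x0 mod h + h}" by (auto split: if_splits)
  qed
  then have "card {x \<in> {0..<2 * h}. (2 * (i - x)) mod (2 * h) = p} \<le> card {x0 mod h, x0 mod h + h}"
    by (intro card_mono) auto
  also have "\<dots> \<le> 2" by (simp add: card_insert_le_m1)
  finally show ?thesis .
qed (simp only: card.empty)

lemma double_diff_mod_eq_of_sum:
  fixes i k i' k' s :: int
  assumes "(k - i + s) mod (2 * s) = (i' + k') mod (2 * s)"
  shows "(2 * (i - k)) mod (2 * s) = (- 2 * (i' + k')) mod (2 * s)"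
proof -
  have "2 * s dvd (k - i + s) - (i' + k')" using assms by (simp only: mod_eq_dvd_iff)
  then have "2 * s dvd (-2) * ((k - i + s) - (i' + k')) + 2 * s" by (intro dvd_add dvd_mult dvd_refl)
  also have "(-2) * ((k - i + s) - (i' + k')) + 2 * s = 2 * (i - k) - (- 2 * (i' + k'))"
    by (simp add: algebra_simps)
  finally show ?thesis by (simp only: mod_eq_dvd_iff)
qed

lemma double_diff_mod_eq_of_diff:
  fixes i k i' k' s :: int
  assumes "(k - i + s) mod (2 * s) = (i' - k' + s) mod (2 * s)"
  shows "(2 * (i - k)) mod (2 * s) = ((i - i' + s) mod (2 * s) - (k - k' + s) mod (2 * s)) mod (2 * s)"
proof -
  have "2 * s dvd (k - i + s) - (i' - k' + s)" using assms by (simp only: mod_eq_dvd_iff)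
  also have "(k - i + s) - (i' - k' + s) = ((i - i' + s) - (k - k' + s)) - 2 * (i - k)"
    by (simp add: algebra_simps)
  finally have "(2 * (i - k)) mod (2 * s) = ((i - i' + s) - (k - k' + s)) mod (2 * s)"
    by (simp only: mod_eq_dvd_iff dvd_diff_commute[of "2 * s" "2 * (i - k)"])
  then show ?thesis by (simp add: mod_diff_eq)
qed

lemma mod_eq_0_or_half_if_dvd_double:
  fixes d j :: int
  assumes "0 < d" "d dvd 2 * j"
  shows "j mod d = 0 \<or> j mod d = d div 2"
proof -
  have "2 * (j mod d) = 2 * j - d * (2 * (j div d))" by (simp add: minus_div_mult_eq_mod[symmetric] algebra_simps)
  then have "d dvd 2 * (j mod d)" using assms(2) by simp
  then obtain q where q: "2 * (j mod d) = d * q" by (elim dvdE)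
  have "0 \<le> d * q" "d * q < d * 2" using q pos_mod_sign[OF assms(1), of j] pos_mod_bound[OF assms(1), of j] by linarith+
  then have "0 \<le> q" "q < 2" using assms(1) by (simp_all add: zero_le_mult_iff mult_less_cancel_left)
  then have "q = 0 \<or> q = 1" by linarith
  then show ?thesis using q by auto
qed

section \<open>The groups Q_{2^(m+1)} and Z2 \<times> Q_{2^(m+1)}\<close>

lemma carrier_quaternion_group: "carrier (quaternion_group m) = {0..<2^m} \<times> {0..<2}"
  by (simp add: quaternion_group_def)

lemma one_quaternion_group [simp]: "\<one>\<^bsub>quaternion_group m\<^esub> = (0, 0)"
  by (simp add: quaternion_group_def)

lemma mult_quaternion_group [simp]:
  "(i, a) \<otimes>\<^bsub>quaternion_group m\<^esub> (k, b) =
     ((i + (if a = 0 then k else - k) + a * b * 2^(m - 1)) mod 2^m, (a + b) mod 2)"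
  by (simp add: quaternion_group_def)

lemma two_power_eq_double: "1 \<le> m \<Longrightarrow> (2::int) ^ m = 2 * 2 ^ (m - 1)"
  by (metis Suc_diff_1 less_le_trans power_Suc zero_less_one)

lemma group_quaternion_group:
  assumes "1 \<le> m" shows "group (quaternion_group m)"
proof (rule groupI)
  let ?Q = "quaternion_group m"
  define s :: int where "s = 2 ^ (m - 1)"
  have two_pow: "(2::int) ^ m = 2 * s" unfolding s_def using assms by (rule two_power_eq_double)
  have s_pos: "0 < s" by (simp add: s_def)
  have s_pred: "2 ^ (m - Suc 0) = s" by (simp add: s_def)
  show "\<one>\<^bsub>?Q\<^esub> \<in> carrier ?Q" by (simp add: carrier_quaternion_group)
  fix x y z assume x: "x \<in> carrier ?Q" and y: "y \<in> carrier ?Q" and z: "z \<in> carrier ?Q"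
  obtain i a k b l w where xyz: "x = (i, a)" "y = (k, b)" "z = (l, w)" by (metis prod.exhaust)
  have a: "a = 0 \<or> a = 1" and b: "b = 0 \<or> b = 1" and w: "w = 0 \<or> w = 1" and i: "0 \<le> i" "i < 2 * s"
    using x y z two_pow by (auto simp: xyz carrier_quaternion_group)
  show "x \<otimes>\<^bsub>?Q\<^esub> y \<in> carrier ?Q" using a b by (auto simp: xyz carrier_quaternion_group)
  \<comment> \<open>In each of the eight cases for a, b, w the two exponents differ by a multiple of 2 * s.\<close>
  show "x \<otimes>\<^bsub>?Q\<^esub> y \<otimes>\<^bsub>?Q\<^esub> z = x \<otimes>\<^bsub>?Q\<^esub> (y \<otimes>\<^bsub>?Q\<^esub> z)"
    using a b w unfolding xyz mult_quaternion_group two_pow s_def[symmetric]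
    by (elim disjE) (simp_all, (rule mod_eq_dvd_iff[THEN iffD2],
          simp only: minus_div_mult_eq_mod[symmetric], simp add: algebra_simps)+)
  show "\<one>\<^bsub>?Q\<^esub> \<otimes>\<^bsub>?Q\<^esub> x = x" using a i by (auto simp: xyz two_pow)
  have "((i + s) mod (2 * s) - i + s) mod (2 * s) = 0"
    by (simp add: minus_div_mult_eq_mod[symmetric] algebra_simps)
  then have "(if a = 0 then ((- i) mod (2 * s), 0) else ((i + s) mod (2 * s), 1)) \<otimes>\<^bsub>?Q\<^esub> x = \<one>\<^bsub>?Q\<^esub>"
    using a by (auto simp: xyz two_pow s_pred mod_simps)
  then show "\<exists>y \<in> carrier ?Q. y \<otimes>\<^bsub>?Q\<^esub> x = \<one>\<^bsub>?Q\<^esub>"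
    using s_pos by (intro bexI) (auto simp: carrier_quaternion_group two_pow)
qed

abbreviation ZQ :: "nat \<Rightarrow> (int \<times> int \<times> int) monoid" where
  "ZQ m \<equiv> Z2 \<times>\<times> quaternion_group m"

lemma finite_carrier_ZQ: "finite (carrier (ZQ m))"
  by (simp add: carrier_quaternion_group carrier_integer_mod_group)

lemma group_ZQ: "1 \<le> m \<Longrightarrow> group (ZQ m)"
  by (intro DirProd_group group_integer_mod_group group_quaternion_group)

text \<open>The cyclic subgroup generated by (c, x^i y); its square is the central element x^(2^(m-1)).\<close>

definition y_subgroup :: "nat \<Rightarrow> int \<Rightarrow> int \<Rightarrow> (int \<times> int \<times> int) set" where
  "y_subgroup m c i = {(0, 0, 0), (c, i, 1), (0, 2^(m-1), 0), (c, i + 2^(m-1), 1)}"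

lemma subgroup_y_subgroup:
  assumes m: "1 \<le> m" and c: "c \<in> {0..<2}" and i: "i \<in> {0..<2^(m-1)}"
  shows "subgroup (y_subgroup m c i) (ZQ m)"
proof (rule group.finite_subgroupI[OF group_ZQ[OF m]])
  define s :: int where "s = 2 ^ (m - 1)"
  have two_pow: "(2::int) ^ m = 2 * s" unfolding s_def using m by (rule two_power_eq_double)
  have s_pred: "2 ^ (m - Suc 0) = s" by (simp add: s_def)
  have s_pos: "0 < s" by (simp add: s_def)
  have c: "c = 0 \<or> c = 1" and i: "0 \<le> i" "i < s" using c i by (auto simp: s_def)
  show "y_subgroup m c i \<subseteq> carrier (ZQ m)"
    using c i s_pos by (auto simp: y_subgroup_def carrier_quaternion_group two_pow s_pred s_def[symmetric])
  fix x y assume "x \<in> y_subgroup m c i" "y \<in> y_subgroup m c i"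
  then show "x \<otimes>\<^bsub>ZQ m\<^esub> y \<in> y_subgroup m c i"
    unfolding y_subgroup_def s_def[symmetric] insert_iff empty_iff
    using c i s_pos
    by (elim disjE insertE) (simp_all add: two_pow s_pred mod_eq_if_near_range)
qed (simp_all add: y_subgroup_def)

lemma card_subgroup_lattice_ZQ_ge:
  assumes m: "1 \<le> m" shows "2 ^ m \<le> card (subgroup_lattice (ZQ m))"
proof -
  define s :: int where "s = 2 ^ (m - 1)"
  let ?I = "{0..<2::int} \<times> {0..<s}"
  have "inj_on (\<lambda>(c, i). y_subgroup m c i) ?I"
  proof (rule inj_onI)
    fix p q assume "p \<in> ?I" "q \<in> ?I" "(\<lambda>(c, i). y_subgroup m c i) p = (\<lambda>(c, i). y_subgroup m c i) q"
    moreover obtain c i c' i' where "p = (c, i)" "q = (c', i')" by fastforce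
    moreover have "(c, i, 1) \<in> y_subgroup m c i" by (simp add: y_subgroup_def)
    ultimately show "p = q" by (auto simp: y_subgroup_def s_def)
  qed
  then have "card ((\<lambda>(c, i). y_subgroup m c i) ` ?I) = card ?I" by (rule card_image)
  also have "card ?I = 2 ^ m"
    using m power_eq_if[of "2::nat" m] by (simp add: card_cartesian_product s_def nat_power_eq)
  finally have "card ((\<lambda>(c, i). y_subgroup m c i) ` ?I) = 2 ^ m" .
  moreover have "(\<lambda>(c, i). y_subgroup m c i) ` ?I \<subseteq> subgroup_lattice (ZQ m)"
    using subgroup_y_subgroup[OF m] by (auto simp: subgroup_lattice_def s_def)
  ultimately show ?thesis
    by (metis card_mono finite_subgroup_lattice finite_carrier_ZQ)
qed

section \<open>The subgroups of Z2 \<times> \<langle>x\<rangle>\<close>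

text \<open>The triple (c, i, a) stands for (c, x^i y^a); ZQ_A m is the abelian subgroup Z2 \<times> \<langle>x\<rangle>.\<close>

definition ZQ_A :: "nat \<Rightarrow> (int \<times> int \<times> int) set" where
  "ZQ_A m = {0..<2} \<times> {0..<2^m} \<times> {0}"

lemma carrier_ZQ_minus_ZQ_A: "carrier (ZQ m) - ZQ_A m = {0..<2} \<times> {0..<2^m} \<times> {1}"
  by (auto simp: ZQ_A_def carrier_quaternion_group carrier_integer_mod_group)

lemma subgroup_index_le_2_ZQ_A:
  assumes m: "1 \<le> m" shows "subgroup_index_le_2 (ZQ m) (ZQ_A m)"
proof (intro subgroup_index_le_2.intro subgroup_index_le_2_axioms.intro)
  show "group (ZQ m)" by (rule group_ZQ[OF m])
  show "subgroup (ZQ_A m) (ZQ m)"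
    by (rule group.finite_subgroupI[OF group_ZQ[OF m]])
      (auto simp: ZQ_A_def carrier_quaternion_group carrier_integer_mod_group)
  show "x \<otimes>\<^bsub>ZQ m\<^esub> y \<in> ZQ_A m" if "x \<in> carrier (ZQ m) - ZQ_A m" "y \<in> carrier (ZQ m) - ZQ_A m" for x y
    using that unfolding carrier_ZQ_minus_ZQ_A by (auto simp: ZQ_A_def)
qed

definition residue_class :: "int \<Rightarrow> int \<Rightarrow> int \<Rightarrow> int set" where
  "residue_class n d r = {x \<in> {0..<n}. x mod d = r}"

definition ZQ_A_set :: "int set \<Rightarrow> int set \<Rightarrow> (int \<times> int \<times> int) set" where
  "ZQ_A_set U V = (\<lambda>i. (0, i, 0)) ` U \<union> (\<lambda>i. (1, i, 0)) ` V"

lemma eq_ZQ_A_set_layers: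
  assumes "B \<subseteq> ZQ_A m" shows "B = ZQ_A_set {i. (0, i, 0) \<in> B} {i. (1, i, 0) \<in> B}"
proof
  show "B \<subseteq> ZQ_A_set {i. (0, i, 0) \<in> B} {i. (1, i, 0) \<in> B}"
  proof
    fix x assume x: "x \<in> B"
    then obtain c i where "x = (c, i, 0)" "c \<in> {0..<2}" using assms by (auto simp: ZQ_A_def)
    moreover have "c \<in> {0..<2} \<longleftrightarrow> c = 0 \<or> c = 1" by auto
    ultimately show "x \<in> ZQ_A_set {i. (0, i, 0) \<in> B} {i. (1, i, 0) \<in> B}"
      using x by (auto simp: ZQ_A_set_def)
  qed
qed (auto simp: ZQ_A_set_def)

lemma odd_layer_eq_residue_class:
  assumes B: "subgroup B (ZQ m)"
    and even: "{i. (0, i, 0) \<in> B} = {x \<in> {0..<2^m}. d dvd x}" and d: "d dvd 2^m"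
    and j: "(1, j, 0) \<in> B"
  shows "{i. (1, i, 0) \<in> B} = residue_class (2^m) d (j mod d)" and "d dvd 2 * j"
proof -
  define n :: int where "n = 2 ^ m"
  have mult: "x \<otimes>\<^bsub>ZQ m\<^esub> y \<in> B" if "x \<in> B" "y \<in> B" for x y
    using B that by (rule subgroup.m_closed)
  have in_range: "0 \<le> i" "i < n" if "(c, i, a) \<in> B" for c i a
    using subgroup.subset[OF B] that by (auto simp: n_def carrier_quaternion_group)
  have even_iff: "(0, i, 0) \<in> B \<longleftrightarrow> i \<in> {0..<n} \<and> d dvd i" for i
    using even unfolding set_eq_iff n_def by blast
  have even_dvd: "d dvd i" if "(0, i mod n, 0) \<in> B" for i
    using that d unfolding even_iff by (simp add: n_def dvd_mod_iff)
  have "(0, (j + j) mod n, 0) \<in> B" using mult[OF j j] by (simp add: n_def)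
  then show dvd_2j: "d dvd 2 * j" using even_dvd[of "j + j"] by (simp only: mult_2)
  show "{i. (1, i, 0) \<in> B} = residue_class (2^m) d (j mod d)"
  proof (rule subset_antisym; rule subsetI)
    fix x assume "x \<in> {i. (1, i, 0) \<in> B}"
    then have x: "(1, x, 0) \<in> B" by simp
    have "(0, (x + j) mod n, 0) \<in> B" using mult[OF x j] by (simp add: n_def)
    then have "d dvd (x + j) - 2 * j" using even_dvd[of "x + j"] dvd_2j by (intro dvd_diff)
    then have "x mod d = j mod d" by (simp add: mod_eq_dvd_iff)
    then show "x \<in> residue_class (2^m) d (j mod d)"
      using in_range[OF x] by (simp add: residue_class_def n_def)
  next
    fix x assume "x \<in> residue_class (2^m) d (j mod d)"
    then have x: "0 \<le> x" "x < n" "x mod d = j mod d" by (auto simp: residue_class_def n_def)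
    then have "d dvd (x - j) mod n" using d by (simp add: n_def dvd_mod_iff mod_eq_dvd_iff)
    then have "(0, (x - j) mod n, 0) \<in> B" unfolding even_iff by (simp add: n_def)
    from mult[OF this j] show "x \<in> {i. (1, i, 0) \<in> B}"
      using x(1,2) by (simp add: n_def mod_simps mod_pos_pos_trivial)
  qed
qed

lemma subgroups_within_ZQ_A_subset:
  "subgroups_within (ZQ m) (ZQ_A m) \<subseteq> (\<Union>k\<le>m. ZQ_A_set (residue_class (2^m) (2^k) 0) `
           {{}, residue_class (2^m) (2^k) 0, residue_class (2^m) (2^k) (2^k div 2)})"
proof
  fix B assume "B \<in> subgroups_within (ZQ m) (ZQ_A m)"
  then have B: "subgroup B (ZQ m)" and BA: "B \<subseteq> ZQ_A m"
    by (auto simp: subgroups_within_def subgroup_lattice_def)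
  define B0 where "B0 = {i. (0, i, 0) \<in> B}"
  define B1 where "B1 = {i. (1, i, 0) \<in> B}"
  have B_eq: "B = ZQ_A_set B0 B1" unfolding B0_def B1_def using BA by (rule eq_ZQ_A_set_layers)
  have "\<exists>d. 0 < d \<and> d dvd 2^m \<and> B0 = {x \<in> {0..<2^m}. d dvd x}"
  proof (rule add_mod_closed_eq_multiples)
    show "B0 \<subseteq> {0..<2^m}"
      using subgroup.subset[OF B] by (auto simp: B0_def carrier_quaternion_group)
    show "0 \<in> B0" using subgroup.one_closed[OF B] by (simp add: B0_def)
    show "(x + y) mod 2^m \<in> B0" if "x \<in> B0" "y \<in> B0" for x y
      using subgroup.m_closed[OF B, of "(0, x, 0)" "(0, y, 0)"] that by (simp add: B0_def)
  qed simp
  then obtain d where d: "0 < d" "d dvd 2^m" and B0: "B0 = {x \<in> {0..<2^m}. d dvd x}" by blast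
  obtain k where k: "k \<le> m" "d = 2 ^ k"
    using divides_primepow[of 2 d m] d by auto
  have B0_class: "B0 = residue_class (2^m) d 0" by (auto simp: B0 residue_class_def dvd_eq_mod_eq_0)
  have "B1 \<in> {{}, residue_class (2^m) d 0, residue_class (2^m) d (d div 2)}"
  proof (cases "B1 = {}")
    case False
    then obtain j where "(1, j, 0) \<in> B" by (auto simp: B1_def)
    note odd = odd_layer_eq_residue_class[OF B B0[unfolded B0_def] d(2) this]
    from mod_eq_0_or_half_if_dvd_double[OF d(1) odd(2)]
    show ?thesis unfolding B1_def odd(1) by (elim disjE) simp_all
  qed simp
  then show "B \<in> (\<Union>k\<le>m. ZQ_A_set (residue_class (2^m) (2^k) 0) `
           {{}, residue_class (2^m) (2^k) 0, residue_class (2^m) (2^k) (2^k div 2)})"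
    using k B_eq B0_class by blast
qed

lemma card_subgroups_within_ZQ_A_le: "card (subgroups_within (ZQ m) (ZQ_A m)) \<le> 3 * (m + 1)"
proof -
  define F where "F k = ZQ_A_set (residue_class (2^m) (2^k) 0) `
    {{}, residue_class (2^m) (2^k) 0, residue_class (2^m) (2^k) (2^k div 2)}" for k
  have "card (subgroups_within (ZQ m) (ZQ_A m)) \<le> card (\<Union>k\<le>m. F k)"
    using subgroups_within_ZQ_A_subset by (intro card_mono) (auto simp: F_def)
  also have "\<dots> \<le> (\<Sum>k\<le>m. card (F k))" by (rule card_UN_le) simp
  also have "\<dots> \<le> (\<Sum>k\<le>m. 3)"
  proof (rule sum_mono)
    fix k
    have "card (F k) \<le> card {{}, residue_class (2^m) (2^k) 0, residue_class (2^m) (2^k) (2^k div 2)}"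
      unfolding F_def by (rule card_image_le) simp
    also have "\<dots> \<le> 3" by (simp add: card_insert_if)
    finally show "card (F k) \<le> 3" .
  qed
  finally show ?thesis by simp
qed

section \<open>Permuting pairs in Z2 \<times> Q_{2^(m+1)}\<close>

definition x_exponent :: "int \<times> int \<times> int \<Rightarrow> int" where
  "x_exponent g = fst (snd g)"

definition permuting_residues :: "nat \<Rightarrow> (int \<times> int \<times> int) set \<Rightarrow> (int \<times> int \<times> int) set \<Rightarrow> int set" where
  "permuting_residues m B C =
     (\<lambda>(b, c). (x_exponent b - x_exponent c) mod 2^m) ` (B \<times> C) \<union>
     (\<lambda>(b, c). (- 2 * (x_exponent b + x_exponent c)) mod 2^m) ` (B \<times> C)"

lemma card_permuting_residues_le:
  assumes "finite B" "finite C" shows "card (permuting_residues m B C) \<le> 2 * card B * card C"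
proof -
  have "card (permuting_residues m B C) \<le>
      card ((\<lambda>(b, c). (x_exponent b - x_exponent c) mod 2^m) ` (B \<times> C)) +
      card ((\<lambda>(b, c). (- 2 * (x_exponent b + x_exponent c)) mod 2^m) ` (B \<times> C))"
    unfolding permuting_residues_def by (rule card_Un_le)
  also have "\<dots> \<le> card (B \<times> C) + card (B \<times> C)"
    by (intro add_mono card_image_le) (simp_all add: assms)
  finally show ?thesis by (simp add: card_cartesian_product)
qed

text \<open>Write (e, x^k y) (c, x^i y) = g g' with g \<in> H and g' \<in> K.  If g and g' lie in A, comparing
  x-exponents gives 2(i - k) = -2(i' + k') modulo 2^m; otherwise (c, x^i y) g and (e, x^k y) g' lie
  in A and their x-exponents differ by 2(i - k).\<close>

lemma permuting_subgroups_residue: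
  assumes m: "1 \<le> m" and H: "subgroup H (ZQ m)" and K: "subgroup K (ZQ m)"
    and HK: "H <#>\<^bsub>ZQ m\<^esub> K = K <#>\<^bsub>ZQ m\<^esub> H"
    and h: "(c, i, 1) \<in> H" and k: "(e, k, 1) \<in> K"
  shows "(2 * (i - k)) mod 2^m \<in> permuting_residues m (H \<inter> ZQ_A m) (K \<inter> ZQ_A m)"
proof -
  define s :: int where "s = 2 ^ (m - 1)"
  have two_pow: "(2::int) ^ m = 2 * s" unfolding s_def using m by (rule two_power_eq_double)
  have s_pred: "2 ^ (m - Suc 0) = s" by (simp add: s_def)
  have "(e, k, 1) \<otimes>\<^bsub>ZQ m\<^esub> (c, i, 1) \<in> K <#>\<^bsub>ZQ m\<^esub> H"
    using h k unfolding set_mult_def by blast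
  then have "(e, k, 1) \<otimes>\<^bsub>ZQ m\<^esub> (c, i, 1) \<in> H <#>\<^bsub>ZQ m\<^esub> K" by (simp only: HK)
  then obtain g g' where g: "g \<in> H" and g': "g' \<in> K"
    and prod: "(e, k, 1) \<otimes>\<^bsub>ZQ m\<^esub> (c, i, 1) = g \<otimes>\<^bsub>ZQ m\<^esub> g'"
    unfolding set_mult_def by blast
  obtain c1 i1 a1 c2 i2 a2 where gg: "g = (c1, i1, a1)" "g' = (c2, i2, a2)" by (metis prod.exhaust)
  have in_A: "x \<in> H \<inter> ZQ_A m" if "x \<in> H" "snd (snd x) = 0" for x
    using that subgroup.subset[OF H] by (auto simp: ZQ_A_def carrier_quaternion_group carrier_integer_mod_group)
  have in_A': "x \<in> K \<inter> ZQ_A m" if "x \<in> K" "snd (snd x) = 0" for x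
    using that subgroup.subset[OF K] by (auto simp: ZQ_A_def carrier_quaternion_group carrier_integer_mod_group)
  have "a1 \<in> {0..<2}" "a2 \<in> {0..<2}"
    using g g' subgroup.subset[OF H] subgroup.subset[OF K] by (auto simp: gg carrier_quaternion_group)
  then have "a1 = 0 \<or> a1 = 1" "a2 = 0 \<or> a2 = 1" by auto
  moreover have "(a1 + a2) mod 2 = 0" using prod by (simp add: gg)
  ultimately consider "a1 = 0" "a2 = 0" | "a1 = 1" "a2 = 1" by auto
  then show ?thesis
  proof cases
    case 1
    have "(k - i + s) mod (2 * s) = (i1 + i2) mod (2 * s)" using prod 1 by (simp add: gg s_pred two_pow)
    then have "(2 * (i - k)) mod 2 ^ m = (- 2 * (x_exponent g + x_exponent g')) mod 2 ^ m"
      unfolding two_pow x_exponent_def gg prod.sel by (rule double_diff_mod_eq_of_sum)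
    moreover have "(g, g') \<in> (H \<inter> ZQ_A m) \<times> (K \<inter> ZQ_A m)"
      using in_A[OF g] in_A'[OF g'] 1 by (simp add: gg)
    ultimately show ?thesis
      unfolding permuting_residues_def by (intro UnI2 image_eqI[where x = "(g, g')"]) simp_all
  next
    case 2
    define u where "u = (c, i, 1) \<otimes>\<^bsub>ZQ m\<^esub> g"
    define v where "v = (e, k, 1) \<otimes>\<^bsub>ZQ m\<^esub> g'"
    have "x_exponent u = (i - i1 + s) mod (2 * s)" "x_exponent v = (k - i2 + s) mod (2 * s)"
      by (simp_all add: u_def v_def gg 2 x_exponent_def s_pred two_pow)
    moreover have "(k - i + s) mod (2 * s) = (i1 - i2 + s) mod (2 * s)" using prod 2 by (simp add: gg s_pred two_pow)
    ultimately have "(2 * (i - k)) mod 2 ^ m = (x_exponent u - x_exponent v) mod 2 ^ m"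
      unfolding two_pow by (simp only: double_diff_mod_eq_of_diff)
    moreover have "(u, v) \<in> (H \<inter> ZQ_A m) \<times> (K \<inter> ZQ_A m)"
      using in_A[OF subgroup.m_closed[OF H h g]] in_A'[OF subgroup.m_closed[OF K k g']] 2
      by (simp add: u_def v_def gg)
    ultimately show ?thesis
      unfolding permuting_residues_def by (intro UnI1 image_eqI[where x = "(u, v)"]) simp_all
  qed
qed

lemma card_outside_row_le:
  assumes m: "1 \<le> m" and P: "finite P"
  shows "card {g \<in> carrier (ZQ m) - ZQ_A m. (2 * (i - x_exponent g)) mod 2^m \<in> P} \<le> 4 * card P"
proof -
  define s :: int where "s = 2 ^ (m - 1)"
  have two_pow: "(2::int) ^ m = 2 * s" unfolding s_def using m by (rule two_power_eq_double)
  define D where "D p = {x \<in> {0..<2 * s}. (2 * (i - x)) mod (2 * s) = p}" for p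
  have finD: "finite (D p)" for p by (auto simp: D_def intro: finite_subset[of _ "{0..<2 * s}"])
  have "{g \<in> carrier (ZQ m) - ZQ_A m. (2 * (i - x_exponent g)) mod 2^m \<in> P}
          \<subseteq> {0..<2} \<times> (\<Union>p\<in>P. D p) \<times> {1}"
    unfolding carrier_ZQ_minus_ZQ_A by (auto simp: D_def two_pow x_exponent_def)
  then have "card {g \<in> carrier (ZQ m) - ZQ_A m. (2 * (i - x_exponent g)) mod 2^m \<in> P}
               \<le> card ({0..<2::int} \<times> (\<Union>p\<in>P. D p) \<times> {1::int})"
    using P finD by (intro card_mono) auto
  also have "\<dots> = 2 * card (\<Union>p\<in>P. D p)" by (simp add: card_cartesian_product)
  also have "card (\<Union>p\<in>P. D p) \<le> (\<Sum>p\<in>P. card (D p))" using P by (rule card_UN_le)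
  also have "(\<Sum>p\<in>P. card (D p)) \<le> (\<Sum>p\<in>P. 2)"
    unfolding D_def using card_solutions_double_mod_le_2 s_def by (intro sum_mono) simp
  finally show ?thesis by simp
qed

lemma card_outside_pairs_le:
  assumes m: "1 \<le> m" and P: "finite P"
  shows "card {(g, g') \<in> (carrier (ZQ m) - ZQ_A m) \<times> (carrier (ZQ m) - ZQ_A m).
                (2 * (x_exponent g - x_exponent g')) mod 2^m \<in> P} \<le> 2^(m+1) * (4 * card P)"
proof -
  define T where "T = carrier (ZQ m) - ZQ_A m"
  have finT: "finite T" unfolding T_def carrier_ZQ_minus_ZQ_A by simp
  have "{(g, g') \<in> T \<times> T. (2 * (x_exponent g - x_exponent g')) mod 2^m \<in> P}
      = (SIGMA g:T. {g' \<in> T. (2 * (x_exponent g - x_exponent g')) mod 2^m \<in> P})" by auto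
  also have "card \<dots> = (\<Sum>g\<in>T. card {g' \<in> T. (2 * (x_exponent g - x_exponent g')) mod 2^m \<in> P})"
    using finT by (intro card_SigmaI) auto
  also have "\<dots> \<le> (\<Sum>g\<in>T. 4 * card P)"
    unfolding T_def by (intro sum_mono card_outside_row_le[OF m P])
  also have "\<dots> = 2 ^ (m + 1) * (4 * card P)"
    unfolding T_def carrier_ZQ_minus_ZQ_A by (simp add: card_cartesian_product nat_power_eq)
  finally show ?thesis unfolding T_def .
qed

lemma card_permuting_fibre_ZQ_le:
  assumes m: "1 \<le> m" and B: "B \<in> subgroups_within (ZQ m) (ZQ_A m)" and C: "C \<in> subgroups_within (ZQ m) (ZQ_A m)"
  shows "card (permuting_fibre (ZQ m) (ZQ_A m) B C) \<le> 2 ^ (m + 4)"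
proof -
  interpret subgroup_index_le_2 "ZQ m" "ZQ_A m" by (rule subgroup_index_le_2_ZQ_A[OF m])
  define P where "P = permuting_residues m B C"
  have sub: "subgroup B (ZQ m)" "subgroup C (ZQ m)"
    using B C by (auto simp: subgroups_within_def subgroup_lattice_def)
  have fin: "finite B" "finite C"
    using finite_subset[OF subgroup.subset finite_carrier_ZQ] sub by blast+
  have "card (permuting_fibre (ZQ m) (ZQ_A m) B C) * (card B * card C)
      \<le> card {(g, g') \<in> (carrier (ZQ m) - ZQ_A m) \<times> (carrier (ZQ m) - ZQ_A m).
                (2 * (x_exponent g - x_exponent g')) mod 2^m \<in> P}"
  proof (rule card_permuting_fibre_mult_le[OF finite_carrier_ZQ])
    fix H K g g' assume HK: "(H, K) \<in> permuting_fibre (ZQ m) (ZQ_A m) B C"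
      and g: "g \<in> H - ZQ_A m" and g': "g' \<in> K - ZQ_A m"
    note F = permuting_fibreD[OF HK]
    obtain c i e k where gg: "g = (c, i, 1)" "g' = (e, k, 1)"
      using g g' subgroup.subset[OF F(1)] subgroup.subset[OF F(2)] carrier_ZQ_minus_ZQ_A[of m] by blast
    then show "(2 * (x_exponent g - x_exponent g')) mod 2^m \<in> P"
      using permuting_subgroups_residue[OF m F(1-3), of c i e k] g g' F(4,5)
      by (simp add: P_def x_exponent_def)
  qed
  also have "\<dots> \<le> 2 ^ (m + 1) * (4 * card P)"
    using fin by (intro card_outside_pairs_le[OF m]) (simp add: P_def permuting_residues_def)
  also have "\<dots> \<le> 2 ^ (m + 1) * (4 * (2 * card B * card C))"
    using card_permuting_residues_le[OF fin, of m] by (simp add: P_def)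
  also have "\<dots> = 2 ^ (m + 4) * (card B * card C)" by (simp add: power_add)
  finally show ?thesis
    using subgroup.finite_imp_card_positive[OF sub(1)] subgroup.finite_imp_card_positive[OF sub(2)]
      finite_carrier_ZQ by simp
qed

lemma sd_ZQ_le:
  assumes m: "1 \<le> m"
  shows "sd (ZQ m) \<le> (6 * (real m + 1) + 144 * (real m + 1) ^ 2) / 2 ^ m"
proof -
  define w where "w = real (card (subgroups_within (ZQ m) (ZQ_A m)))"
  define n where "n = real (card (subgroup_lattice (ZQ m)))"
  define q where "q = 3 * (real m + 1)"
  have "w \<le> real (3 * (m + 1))"
    using card_subgroups_within_ZQ_A_le unfolding w_def of_nat_le_iff .
  then have w: "0 \<le> w" "w \<le> q" by (simp_all add: w_def q_def)
  have "real (2 ^ m) \<le> n"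
    using card_subgroup_lattice_ZQ_ge[OF m] unfolding n_def of_nat_le_iff .
  then have n: "2 ^ m \<le> n" by simp
  have "sd (ZQ m) \<le> 2 * w / n + w ^ 2 * 2 ^ (m + 4) / n ^ 2"
    using sd_le_fibre_bound[OF group_ZQ[OF m] finite_carrier_ZQ
        subgroup_index_le_2.subgroup_A[OF subgroup_index_le_2_ZQ_A[OF m]] card_permuting_fibre_ZQ_le[OF m]]
    by (simp add: w_def n_def)
  also have "\<dots> \<le> 2 * q / 2 ^ m + q ^ 2 * 2 ^ (m + 4) / (2 ^ m) ^ 2"
    using w n by (intro add_mono frac_le mult_right_mono power_mono) auto
  also have "\<dots> = (6 * (real m + 1) + 144 * (real m + 1) ^ 2) / 2 ^ m"
    by (simp add: q_def power_add field_simps power2_eq_square)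
  finally show ?thesis .
qed

theorem corollary2p8:
  shows "(\<lambda>m. sd (DirProd Z2 (quaternion_group m))) \<longlonglongrightarrow> 0"
proof (rule real_tendsto_sandwich)
  show "\<forall>\<^sub>F m in sequentially. 0 \<le> sd (DirProd Z2 (quaternion_group m))"
    by (simp add: sd_def)
  show "\<forall>\<^sub>F m in sequentially. sd (DirProd Z2 (quaternion_group m))
      \<le> (6 * (real m + 1) + 144 * (real m + 1) ^ 2) / 2 ^ m"
    using eventually_ge_at_top[of 1] by eventually_elim (rule sd_ZQ_le)
  show "(\<lambda>m::nat. (6 * (real m + 1) + 144 * (real m + 1) ^ 2) / 2 ^ m) \<longlonglongrightarrow> 0"
    by real_asymp
qed simp

end
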